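(* For every oriented diagram $D$ with double lines of degree $0$, $pr_{wp}(pr_{wp}(D))=pr_{wp}(D)$.
   Context: A diagram with double lines (representing a knot in $S_g\times S^1$, $S_g$ a closed oriented surface) is a virtual knot diagram in the plane decorated by finitely many double lines, marks on the curve away from crossings recording where the knot meets a fixed level $S_g\times\{x_0\}$; for an oriented diagram each double line has a sign $\pm1$ according to the direction in which the knot passes through that level. The degree is the sum of the signs of all double lines. For a classical crossing $c$, $\gamma_c$ is the closed path following the oriented curve from $c$, leaving along the under-strand, until it first returns to $c$; the winding parity of $c$ is the sum of the signs of the double lines on $\gamma_c$ (an integer in degree $0$). For a degree-$0$ diagram $D$, $pr_{wp}(D)$ is obtained as follows: for each classical crossing $c$ with winding parity $i$, if $i\ge0$ keep $c$ and put $j=i$; if $i<0$ switch over/under at $c$ and put $j=-i$; then on the under-strand of the resulting crossing insert $j$ double lines of sign $-1$ immediately after $c$ and $j$ double lines of sign $+1$ immediately before $c$. *)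

theory Defs
  imports Main
begin

text \<open>Combinatorial model (Gauss diagram) of an oriented virtual knot diagram with
double lines.  The oriented curve, read from a base point, is a list of events:
a passage through classical crossing c, either along the over-strand
(Cr c True) or along the under-strand (Cr c False), or a double line with sign
+1 (DL True) or -1 (DL False).\<close>

datatype ev = Cr nat bool | DL bool

record diagram =
  word :: "ev list"
  csign :: "nat \<Rightarrow> int"

definition crossings :: "diagram \<Rightarrow> nat set" where
  "crossings D = {c. Cr c True \<in> set (word D) \<or> Cr c False \<in> set (word D)}"

definition wf_diagram :: "diagram \<Rightarrow> bool" where
  "wf_diagram D \<longleftrightarrow>
     (\<forall>c\<in>crossings D. count_list (word D) (Cr c True) = 1
                     \<and> count_list (word D) (Cr c False) = 1
                     \<and> csign D c \<in> {-1, 1})"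

fun dlsign :: "ev \<Rightarrow> int" where
  "dlsign (DL b) = (if b then 1 else -1)"
| "dlsign (Cr _ _) = 0"

definition degree :: "diagram \<Rightarrow> int" where
  "degree D = sum_list (map dlsign (word D))"

text \<open>gamma_c: the events strictly after the under-passage of c up to (excluding)
the next passage through c, i.e. the over-passage (cyclically).\<close>
definition gamma :: "ev list \<Rightarrow> nat \<Rightarrow> ev list" where
  "gamma w c =
     (let r = dropWhile (\<lambda>e. e \<noteq> Cr c False) w @ takeWhile (\<lambda>e. e \<noteq> Cr c False) w
      in takeWhile (\<lambda>e. e \<noteq> Cr c True) (tl r))"

definition winding_parity :: "diagram \<Rightarrow> nat \<Rightarrow> int" where
  "winding_parity D c = sum_list (map dlsign (gamma (word D) c))"

definition pr_wp_ev :: "diagram \<Rightarrow> ev \<Rightarrow> ev list" where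
  "pr_wp_ev D e = (case e of
       DL b \<Rightarrow> [DL b]
     | Cr c b \<Rightarrow>
         (let i = winding_parity D c;
              b' = (if i \<ge> 0 then b else \<not> b);
              j = nat \<bar>i\<bar>
          in if b' then [Cr c b']
             else replicate j (DL True) @ [Cr c b'] @ replicate j (DL False)))"

definition pr_wp :: "diagram \<Rightarrow> diagram" where
  "pr_wp D = \<lparr> word = concat (map (pr_wp_ev D) (word D)),
               csign = (\<lambda>c. if c \<in> crossings D \<and> winding_parity D c < 0 then - csign D c else csign D c) \<rparr>"

end

theory Submission
  imports Defs
begin

text \<open>In degree 0 the two arcs into which the passages of a crossing c cut the curve carry
opposite signed counts of double lines, so the winding parity i of c is the count on the arc
leaving c along the under-strand and -i that on the arc leaving along the over-strand.
Switching c therefore replaces i by j = |i|. In pr_wp D the j double lines of sign -1 inserted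
right after the under-passage lie on the new arc and cancel its count j, while the j of sign +1
lie on the complementary arc. Since pr_wp preserves the degree, every crossing of pr_wp D has
winding parity 0, and pr_wp leaves such a diagram unchanged.\<close>

abbreviation dl_sum :: "ev list \<Rightarrow> int" where
  "dl_sum s \<equiv> sum_list (map dlsign s)"

definition passes :: "nat \<Rightarrow> ev list \<Rightarrow> bool" where
  "passes c s \<longleftrightarrow> (\<exists>b. Cr c b \<in> set s)"

lemma passes_iff_either:
  "passes c s \<longleftrightarrow> Cr c b \<in> set s \<or> Cr c (\<not> b) \<in> set s"
  by (cases b) (auto simp: passes_def ex_bool_eq)

lemma passes_append [simp]: "passes c (s @ t) \<longleftrightarrow> passes c s \<or> passes c t"
  by (auto simp: passes_def)

lemma not_passes_replicate_DL [simp]: "\<not> passes c (replicate j (DL b))"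
  by (simp add: passes_def)

lemma gamma_append_under:
  assumes "Cr c False \<notin> set a"
  shows "gamma (a @ Cr c False # r) c = takeWhile (\<lambda>e. e \<noteq> Cr c True) (r @ a)"
  using assms by (auto simp: gamma_def dropWhile_append takeWhile_append)

lemma gamma_under_first:
  assumes "Cr c False \<notin> set a" "Cr c True \<notin> set p"
  shows "gamma (a @ Cr c False # p @ Cr c True # q) c = p"
  using assms by (simp add: gamma_append_under takeWhile_append)

lemma gamma_over_first:
  assumes "Cr c False \<notin> set a" "Cr c True \<notin> set a" "Cr c False \<notin> set p" "Cr c True \<notin> set q"
  shows "gamma (a @ Cr c True # p @ Cr c False # q) c = q @ a"
  using gamma_append_under[of c "a @ Cr c True # p" q] assms by (simp add: takeWhile_append)

lemma winding_parity_split: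
  assumes "degree D = 0" and "word D = a @ Cr c b # p @ Cr c (\<not> b) # q"
    and "\<not> passes c a" "\<not> passes c p" "\<not> passes c q"
  shows "winding_parity D c = (if b then - dl_sum p else dl_sum p)"
proof (cases b)
  case True
  then have "winding_parity D c = dl_sum q + dl_sum a"
    using assms(2-) by (simp add: winding_parity_def gamma_over_first passes_def)
  moreover have "dl_sum a + dl_sum p + dl_sum q = 0"
    using assms(1,2) True by (simp add: degree_def)
  ultimately show ?thesis using True by simp
next
  case False
  then show ?thesis
    using assms(2-) by (simp add: winding_parity_def gamma_under_first passes_def)
qed

lemma word_split_at_crossing:
  assumes "wf_diagram D" and "c \<in> crossings D"
  obtains a b p q where "word D = a @ Cr c b # p @ Cr c (\<not> b) # q"
    and "\<not> passes c a" "\<not> passes c p" "\<not> passes c q"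
proof -
  have once: "count_list (word D) (Cr c b) = 1" for b
    using assms by (cases b) (auto simp: wf_diagram_def)
  have "\<exists>x\<in>set (word D). \<exists>b. x = Cr c b"
    using assms(2) by (auto simp: crossings_def)
  then obtain a e r where w: "word D = a @ e # r" and "\<exists>b. e = Cr c b"
    and a: "\<forall>x\<in>set a. \<nexists>b. x = Cr c b"
    by (rule split_list_first_propE)
  then obtain b where e: "e = Cr c b" by blast
  have a_free: "\<not> passes c a"
    using a by (auto simp: passes_def)
  then have "Cr c b \<notin> set r" "count_list r (Cr c (\<not> b)) = 1"
    using once[of b] once[of "\<not> b"] by (simp_all add: w e passes_def flip: count_list_0_iff)
  moreover obtain p q where r: "r = p @ Cr c (\<not> b) # q" and "Cr c (\<not> b) \<notin> set p"
    using split_list_first \<open>count_list r (Cr c (\<not> b)) = 1\<close>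
    by (metis count_list_0_iff zero_neq_one)
  ultimately have "Cr c (\<not> b) \<notin> set q"
    by (simp flip: count_list_0_iff)
  with that[of a b p q] a_free show thesis
    using \<open>Cr c b \<notin> set r\<close> \<open>Cr c (\<not> b) \<notin> set p\<close>
    by (simp add: w e r passes_iff_either[of c _ b])
qed

lemma dl_sum_pr_wp_ev: "dl_sum (pr_wp_ev D e) = dlsign e"
  by (cases e) (auto simp: pr_wp_ev_def Let_def sum_list_replicate)

lemma dl_sum_concat_pr_wp_ev: "dl_sum (concat (map (pr_wp_ev D) s)) = dl_sum s"
  by (induction s) (simp_all add: dl_sum_pr_wp_ev)

lemma degree_pr_wp: "degree (pr_wp D) = degree D"
  by (simp add: degree_def pr_wp_def dl_sum_concat_pr_wp_ev)

lemma passes_pr_wp_ev: "passes c (pr_wp_ev D e) \<longleftrightarrow> passes c [e]"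
  by (cases e) (auto simp: passes_def pr_wp_ev_def Let_def)

lemma passes_concat_pr_wp_ev: "passes c (concat (map (pr_wp_ev D) s)) \<longleftrightarrow> passes c s"
proof (induction s)
  case (Cons e s)
  then show ?case
    using passes_pr_wp_ev[of c D e] by (auto simp: passes_def)
qed (simp add: passes_def)

lemma crossings_pr_wp: "crossings (pr_wp D) = crossings D"
  using passes_concat_pr_wp_ev[of _ D "word D"]
  by (auto simp: crossings_def pr_wp_def passes_def ex_bool_eq)

lemma pr_wp_ev_Cr:
  "pr_wp_ev D (Cr c b) =
     (if 0 \<le> winding_parity D c \<longleftrightarrow> b then [Cr c True]
      else replicate (nat \<bar>winding_parity D c\<bar>) (DL True) @ Cr c False
             # replicate (nat \<bar>winding_parity D c\<bar>) (DL False))"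
  by (simp add: pr_wp_ev_def Let_def)

lemma pr_wp_eq_self:
  assumes "\<forall>c\<in>crossings D. winding_parity D c = 0"
  shows "pr_wp D = D"
proof -
  have "pr_wp_ev D e = [e]" if "e \<in> set (word D)" for e
  proof (cases e)
    case (Cr c b)
    then have "c \<in> crossings D"
      using that by (cases b) (auto simp: crossings_def)
    with assms Cr show ?thesis
      by (simp add: pr_wp_ev_def)
  qed (simp add: pr_wp_ev_def)
  then have "concat (map (pr_wp_ev D) (word D)) = word D"
    by (simp add: map_idI cong: map_cong)
  with assms show ?thesis
    unfolding pr_wp_def by (intro diagram.equality) (auto simp: fun_eq_iff)
qed

lemma winding_parity_pr_wp:
  assumes "wf_diagram D" and "degree D = 0" and "c \<in> crossings D"
  shows "winding_parity (pr_wp D) c = 0"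
proof -
  obtain a b p q where w: "word D = a @ Cr c b # p @ Cr c (\<not> b) # q"
    and free: "\<not> passes c a" "\<not> passes c p" "\<not> passes c q"
    using word_split_at_crossing[OF assms(1,3)] .
  define i where "i = winding_parity D c"
  define j where "j = nat \<bar>i\<bar>"
  define F where "F s = concat (map (pr_wp_ev D) s)" for s
  have i: "i = (if b then - dl_sum p else dl_sum p)"
    unfolding i_def using assms(2) w free by (rule winding_parity_split)
  have deg: "degree (pr_wp D) = 0"
    using assms(2) by (simp add: degree_pr_wp)
  have free': "\<not> passes c (F a)" "\<not> passes c (F p)" "\<not> passes c (F q)"
    using free by (simp_all add: F_def passes_concat_pr_wp_ev)
  have sum: "dl_sum (F p) = dl_sum p"
    by (simp add: F_def dl_sum_concat_pr_wp_ev)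
  have "word (pr_wp D) = F a @ pr_wp_ev D (Cr c b) @ F p @ pr_wp_ev D (Cr c (\<not> b)) @ F q"
    by (simp add: pr_wp_def w F_def)
  also have "\<dots> = (if 0 \<le> i \<longleftrightarrow> b
      then F a @ Cr c True # (F p @ replicate j (DL True))
             @ Cr c False # (replicate j (DL False) @ F q)
      else (F a @ replicate j (DL True)) @ Cr c False # (replicate j (DL False) @ F p)
             @ Cr c True # F q)"
    by (simp add: pr_wp_ev_Cr flip: i_def j_def)
  finally have word: "word (pr_wp D) = \<dots>" .
  show ?thesis
  proof (cases "0 \<le> i \<longleftrightarrow> b")
    case True
    then have "winding_parity (pr_wp D) c = - dl_sum (F p @ replicate j (DL True))"
      using winding_parity_split[OF deg, where b = True and a = "F a"
          and p = "F p @ replicate j (DL True)" and q = "replicate j (DL False) @ F q"]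
        word free' by simp
    with True i show ?thesis
      by (auto simp: sum sum_list_replicate j_def)
  next
    case False
    then have "winding_parity (pr_wp D) c = dl_sum (replicate j (DL False) @ F p)"
      using winding_parity_split[OF deg, where b = False and a = "F a @ replicate j (DL True)"
          and p = "replicate j (DL False) @ F p" and q = "F q"]
        word free' by simp
    with False i show ?thesis
      by (auto simp: sum sum_list_replicate j_def)
  qed
qed

theorem mainTheorem3:
  assumes "wf_diagram D" and "degree D = 0"
  shows "pr_wp (pr_wp D) = pr_wp D"
proof (rule pr_wp_eq_self)
  show "\<forall>c\<in>crossings (pr_wp D). winding_parity (pr_wp D) c = 0"
    using winding_parity_pr_wp[OF assms] by (simp add: crossings_pr_wp)
qed

end
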